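(* Let $p>0$, $0<\alpha<p$, $0<\ell\le\infty$, and let $f$ be a measurable, non-negative, non-increasing function on $(0,\ell)$. (a) If $p\ge1$, then $$\int_0^\ell\Big(\int_0^x f(y)dy\Big)^p x^{-\alpha}\frac{dx}{x}\ge\frac p\alpha\int_0^\ell (xf(x))^p x^{-\alpha}\Big(1-\Big(\frac x\ell\Big)^\alpha\Big)\frac{dx}{x}.$$ (b) If $0<p\le1$, this inequality holds in the reversed direction. (c) The constant $p/\alpha$ is sharp in both (a) and (b); equality holds for every function $f=A\chi_{(0,c)}$ with $c\in(0,\ell)$ and $A>0$.
   Context: When $\ell=\infty$, $(x/\ell)^\alpha$ is interpreted as $0$. $\chi_E$ denotes the indicator function of $E$. *)

theory Defs
  imports "HOL-Analysis.Analysis"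
begin

definition ivl :: "ereal \<Rightarrow> real set" where
  "ivl l = {x. 0 < x \<and> ereal x < l}"

definition epowr :: "ennreal \<Rightarrow> real \<Rightarrow> ennreal" where
  "epowr a p = (if a = top then top else ennreal (enn2real a powr p))"

definition wt :: "ereal \<Rightarrow> real \<Rightarrow> real \<Rightarrow> real" where
  "wt l \<alpha> x = (if l = \<infinity> then 1 else 1 - (x / real_of_ereal l) powr \<alpha>)"

definition admissible :: "ereal \<Rightarrow> (real \<Rightarrow> real) \<Rightarrow> bool" where
  "admissible l f \<longleftrightarrow>
     f \<in> borel_measurable (restrict_space lborel (ivl l)) \<and>
     (\<forall>x\<in>ivl l. 0 \<le> f x) \<and>
     (\<forall>x\<in>ivl l. \<forall>y\<in>ivl l. x \<le> y \<longrightarrow> f y \<le> f x)"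

definition hardyL :: "real \<Rightarrow> real \<Rightarrow> ereal \<Rightarrow> (real \<Rightarrow> real) \<Rightarrow> ennreal" where
  "hardyL p \<alpha> l f =
     (\<integral>\<^sup>+ x\<in>ivl l. epowr (\<integral>\<^sup>+ y\<in>{0<..<x}. ennreal (f y) \<partial>lborel) p
                     * ennreal (x powr (-\<alpha>) / x) \<partial>lborel)"

definition hardyR :: "real \<Rightarrow> real \<Rightarrow> ereal \<Rightarrow> (real \<Rightarrow> real) \<Rightarrow> ennreal" where
  "hardyR p \<alpha> l f =
     (\<integral>\<^sup>+ x\<in>ivl l. ennreal ((x * f x) powr p * x powr (-\<alpha>) * wt l \<alpha> x / x) \<partial>lborel)"

end

theory Submission
  imports Defs
begin

text \<open>Let \<open>F x = \<integral>\<^sub>0\<^sup>x f\<close>. The substitution \<open>u = F t\<close> gives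
  \<open>F(x)^p = \<integral>\<^sub>0\<^sup>x p F(t)^(p-1) f(t) dt\<close>, and monotonicity of \<open>f\<close> gives \<open>F t \<ge> t f t\<close>.
  Hence \<open>F(x)^p \<ge> \<integral>\<^sub>0\<^sup>x p t^(p-1) f(t)^p dt\<close> for \<open>p \<ge> 1\<close>, and the reverse for \<open>p \<le> 1\<close>.
  Integrating against \<open>x^(-\<alpha>) dx/x\<close> over \<open>(0,l)\<close> and exchanging the order of integration,
  using \<open>\<integral>\<^sub>t\<^sup>l x^(-\<alpha>) dx/x = t^(-\<alpha>) (1 - (t/l)^\<alpha>) / \<alpha>\<close>, turns the right-hand side into
  \<open>p/\<alpha>\<close> times the right integral of the theorem. For \<open>f = A \<chi>\<close> with \<open>\<chi>\<close> the indicator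
  of \<open>(0,c)\<close>, \<open>F t = t f t\<close> wherever \<open>f t > 0\<close>, so every step is an equality; this gives
  sharpness.\<close>

section \<open>Primitive of a non-negative non-increasing function\<close>

lemma powr_weight_eq:
  fixes y a p :: real
  assumes "0 < y" "0 \<le> a"
  shows "p * y powr (p - 1) * a powr p = a * (p * (y * a) powr (p - 1))"
proof (cases "a = 0")
  case False
  then have "a powr p = a * a powr (p - 1)"
    using assms by (simp add: powr_diff)
  then show ?thesis
    using assms by (simp add: powr_mult)
qed simp

locale nonneg_decreasing =
  fixes f :: "real \<Rightarrow> real" and x :: real
  assumes x_pos: "0 < x"
    and measurable_on: "(\<lambda>y. f y * indicator {0<..<x} y) \<in> borel_measurable borel"
    and nonneg: "\<And>y. 0 < y \<Longrightarrow> y < x \<Longrightarrow> 0 \<le> f y"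
    and antimono: "\<And>y z. 0 < y \<Longrightarrow> y \<le> z \<Longrightarrow> z < x \<Longrightarrow> f z \<le> f y"

locale nonneg_decreasing_integrable = nonneg_decreasing +
  fixes I :: real
  assumes nn_integral_eq: "(\<integral>\<^sup>+y\<in>{0<..<x}. ennreal (f y) \<partial>lborel) = ennreal I"
    and I_nonneg: "0 \<le> I"
begin

definition f0 :: "real \<Rightarrow> real" where
  "f0 y = f y * indicator {0<..<x} y"

definition primitive :: "real \<Rightarrow> real" where
  "primitive t = integral {0..t} f0"

lemma f0_nonneg: "0 \<le> f0 y"
  using nonneg by (auto simp: f0_def indicator_def)

lemma f0_eq: "0 < y \<Longrightarrow> y < x \<Longrightarrow> f0 y = f y"
  by (simp add: f0_def)

lemma f0_measurable [measurable]: "f0 \<in> borel_measurable borel"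
  using measurable_on by (simp add: f0_def[abs_def])

lemma f0_has_integral: "(f0 has_integral I) UNIV"
proof -
  have "(\<integral>\<^sup>+y. ennreal (f0 y) \<partial>lborel) = ennreal I"
    unfolding nn_integral_eq[symmetric] by (rule nn_integral_cong) (auto simp: f0_def indicator_def)
  then show ?thesis
    by (intro nn_integral_has_integral) (auto simp: f0_nonneg I_nonneg)
qed

lemma f0_integrable_on: "f0 integrable_on {a..b}"
  using f0_has_integral integrable_on_subinterval by blast

lemma primitive_0: "primitive 0 = 0"
  by (simp add: primitive_def)

lemma primitive_x: "primitive x = I"
proof -
  have "((\<lambda>y. if y \<in> {0..x} then f0 y else 0) has_integral I) UNIV"
    using f0_has_integral by (rule has_integral_eq[rotated]) (auto simp: f0_def)
  then have "(f0 has_integral I) {0..x}"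
    by (simp only: has_integral_restrict_UNIV)
  then show ?thesis
    by (simp add: primitive_def integral_unique)
qed

lemma primitive_combine: "0 \<le> s \<Longrightarrow> s \<le> t \<Longrightarrow> primitive t = primitive s + integral {s..t} f0"
  using Henstock_Kurzweil_Integration.integral_combine[OF _ _ f0_integrable_on]
  by (simp add: primitive_def)

lemma primitive_mono:
  assumes "0 \<le> s" "s \<le> t"
  shows "primitive s \<le> primitive t"
  using primitive_combine[OF assms] integral_nonneg[OF f0_integrable_on, of s t] f0_nonneg by force

lemma primitive_nonneg: "0 \<le> t \<Longrightarrow> 0 \<le> primitive t"
  using primitive_mono[of 0 t] primitive_0 by simp

lemma continuous_on_primitive: "continuous_on {0..x} primitive"
  unfolding primitive_def[abs_def] by (rule indefinite_integral_continuous_1[OF f0_integrable_on])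

lemma primitive_eq_nn_integral:
  assumes "0 < t" "t < x"
  shows "ennreal (primitive t) = (\<integral>\<^sup>+y\<in>{0<..<t}. ennreal (f y) \<partial>lborel)"
proof -
  have "(f0 has_integral primitive t) {0..t}"
    unfolding primitive_def using f0_integrable_on by blast
  then have "(\<integral>\<^sup>+y\<in>{0..t}. ennreal (f0 y) \<partial>lborel) = ennreal (primitive t)"
    by (intro nn_integral_has_integral_lebesgue') (auto simp: f0_nonneg)
  moreover have "(\<integral>\<^sup>+y\<in>{0..t}. ennreal (f0 y) \<partial>lborel) = (\<integral>\<^sup>+y\<in>{0<..<t}. ennreal (f y) \<partial>lborel)"
  proof (rule nn_integral_cong_AE)
    show "AE y in lborel. ennreal (f0 y) * indicator {0..t} y = ennreal (f y) * indicator {0<..<t} y"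
      using AE_lborel_singleton[of 0] AE_lborel_singleton[of t]
      by eventually_elim (use assms in \<open>auto simp: f0_def indicator_def\<close>)
  qed
  ultimately show ?thesis by simp
qed

lemma mult_le_primitive:
  assumes "0 < t" "t < x"
  shows "t * f t \<le> primitive t"
proof -
  have "integral {0<..<t} (\<lambda>_. f t) \<le> integral {0<..<t} f0"
  proof (rule integral_le)
    show "(\<lambda>_. f t) integrable_on {0<..<t}"
      using integrable_const_ivl[of "f t" 0 t] by (simp add: integrable_on_open_interval_real)
    show "f0 integrable_on {0<..<t}"
      using f0_integrable_on[of 0 t] by (simp add: integrable_on_open_interval_real)
  qed (use assms in \<open>auto simp: f0_eq intro!: antimono\<close>)
  then show ?thesis
    using assms by (simp add: primitive_def integral_open_interval_real[symmetric])
qed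

lemma primitive_strict_mono:
  assumes "0 < s" "s < t" "t < x" "0 < f t"
  shows "primitive s < primitive t"
proof -
  have "(t - s) * f t = integral {s..t} (\<lambda>_. f t)"
    using assms by simp
  also have "\<dots> \<le> integral {s..t} f0"
    by (rule integral_le[OF integrable_const_ivl f0_integrable_on])
      (use assms in \<open>auto simp: f0_eq intro!: antimono\<close>)
  finally have "(t - s) * f t \<le> integral {s..t} f0" .
  moreover have "0 < (t - s) * f t"
    using assms by simp
  ultimately show ?thesis
    using primitive_combine[of s t] assms by linarith
qed

lemma primitive_has_derivative:
  assumes "0 < t" "t < x" "isCont f0 t"
  shows "(primitive has_real_derivative f t) (at t within {0..x})"
proof -
  have "((\<lambda>u. integral {0..u} f0) has_vector_derivative f0 t) (at t within {0..x} - {})"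
    using assms continuous_at_imp_continuous_at_within
    by (intro integral_has_vector_derivative_continuous_at f0_integrable_on) auto
  then show ?thesis
    using assms by (simp add: primitive_def[abs_def] f0_eq has_real_derivative_iff_has_vector_derivative)
qed

lemma countable_discontinuities: "countable {t \<in> {0<..<x}. \<not> isCont f0 t}"
proof -
  have "mono_on {0<..<x} (\<lambda>y. - f0 y)"
    by (auto simp: mono_on_def f0_eq intro!: antimono)
  then have "countable {t \<in> {0<..<x}. \<not> isCont (\<lambda>y. - f0 y) t}"
    by (intro mono_on_ctble_discont_open) auto
  moreover have "isCont (\<lambda>y. - f0 y) t \<longleftrightarrow> isCont f0 t" for t
    using continuous_minus[of "at t" "\<lambda>y. - f0 y"] continuous_minus[of "at t" f0] by auto
  ultimately show ?thesis by simp
qed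

lemma primitive_attains:
  assumes "0 < u" "u < I"
  obtains t where "0 < t" "t < x" "0 < f t" "primitive t = u"
proof -
  obtain t where t: "0 \<le> t" "t \<le> x" "primitive t = u"
    using IVT'[of primitive 0 u x] assms primitive_0 primitive_x continuous_on_primitive x_pos
    by auto
  have t_bounds: "0 < t" "t < x"
    using t assms primitive_0 primitive_x by (auto simp: order.order_iff_strict)
  have "0 < f t"
  proof (rule ccontr)
    assume "\<not> 0 < f t"
    then have ft: "f t = 0"
      using nonneg[OF t_bounds] by simp
    have "integral {t..x} f0 = integral {t..x} (\<lambda>_. 0::real)"
    proof (rule integral_cong)
      fix y assume y: "y \<in> {t..x}"
      show "f0 y = 0"
      proof (cases "y < x")
        case True
        then have "f y \<le> f t" "0 \<le> f y"
          using y t_bounds by (auto intro: antimono nonneg)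
        then show ?thesis
          using ft by (simp add: f0_def)
      qed (simp add: f0_def)
    qed
    then have "primitive x = primitive t"
      using primitive_combine[of t x] t by simp
    then show False
      using t assms primitive_x by simp
  qed
  then show thesis
    using that t_bounds t by blast
qed

definition regular :: "real set" where
  "regular = {t \<in> {0<..<x}. 0 < f t \<and> isCont f0 t}"

lemma regular_sets: "regular \<in> sets lebesgue"
proof -
  have "{t \<in> {0<..<x}. 0 < f t} = {t \<in> space borel. 0 < f0 t} \<inter> {0<..<x}"
    by (auto simp: f0_def)
  also have "\<dots> \<in> sets borel"
    by measurable
  finally have "{t \<in> {0<..<x}. 0 < f t} \<in> sets borel" .
  moreover have "{t \<in> {0<..<x}. \<not> isCont f0 t} \<in> sets borel"
    by (rule sets.countable[OF _ countable_discontinuities]) auto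
  moreover have "regular = {t \<in> {0<..<x}. 0 < f t} - {t \<in> {0<..<x}. \<not> isCont f0 t}"
    by (auto simp: regular_def)
  ultimately have "regular \<in> sets borel"
    by simp
  then show ?thesis
    by (metis sets_completionI_sets sets_lborel)
qed

lemma primitive_has_derivative_regular:
  "t \<in> regular \<Longrightarrow> (primitive has_field_derivative f t) (at t within regular)"
  by (rule DERIV_subset[OF primitive_has_derivative]) (auto simp: regular_def)

lemma inj_on_primitive_regular: "inj_on primitive regular"
proof (rule inj_onI)
  fix s t assume "s \<in> regular" "t \<in> regular" "primitive s = primitive t"
  then show "s = t"
    using primitive_strict_mono[of s t] primitive_strict_mono[of t s]
    by (cases s t rule: linorder_cases) (auto simp: regular_def)
qed

lemma primitive_image_regular: "primitive ` regular \<subseteq> {0..I}"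
  using primitive_nonneg primitive_mono[of _ x] primitive_x by (force simp: regular_def)

lemma negligible_diff_primitive_image: "negligible ({0..I} - primitive ` regular)"
proof -
  let ?D = "{t \<in> {0<..<x}. \<not> isCont f0 t}"
  have "countable ({0, I} \<union> primitive ` ?D)"
    using countable_discontinuities by auto
  then have "negligible ({0, I} \<union> primitive ` ?D)"
    by (simp add: negligible_iff_null_sets null_sets_completionI countable_imp_null_set_lborel)
  moreover have "{0..I} - primitive ` regular \<subseteq> {0, I} \<union> primitive ` ?D"
  proof
    fix u assume u: "u \<in> {0..I} - primitive ` regular"
    show "u \<in> {0, I} \<union> primitive ` ?D"
    proof (cases "u = 0 \<or> u = I")
      case False
      then have "0 < u" "u < I"
        using u by auto
      then obtain t where "0 < t" "t < x" "0 < f t" "primitive t = u"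
        by (rule primitive_attains)
      then show ?thesis
        using u by (auto simp: regular_def)
    qed auto
  qed
  ultimately show ?thesis
    by (rule negligible_subset)
qed

text \<open>Substitution \<open>u = F t\<close> for the primitive \<open>F\<close> of \<open>f\<close>: \<open>F\<close> is injective and differentiable
  with derivative \<open>f\<close> on the regular points, whose image covers \<open>[0, I]\<close> up to a null set.\<close>
lemma nn_integral_substitution:
  assumes \<psi>: "(\<psi> has_integral J) {0..I}" and \<psi>_nonneg: "\<And>u. 0 \<le> \<psi> u"
  shows "(\<integral>\<^sup>+t\<in>{0<..<x}. ennreal (f t * \<psi> (primitive t)) \<partial>lborel) = ennreal J"
proof -
  have "(\<psi> has_integral J) {0..I} \<longleftrightarrow> (\<psi> has_integral J) (primitive ` regular)"
  proof (rule has_integral_spike_set_eq)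
    show "negligible {u \<in> {0..I} - primitive ` regular. \<psi> u \<noteq> 0}"
      using negligible_diff_primitive_image by (rule negligible_subset) auto
    have "{u \<in> primitive ` regular - {0..I}. \<psi> u \<noteq> 0} = {}"
      using primitive_image_regular by auto
    then show "negligible {u \<in> primitive ` regular - {0..I}. \<psi> u \<noteq> 0}"
      by (simp only: negligible_empty)
  qed
  with \<psi> have \<psi>_image: "(\<psi> has_integral J) (primitive ` regular)"
    by simp
  then have "\<psi> absolutely_integrable_on primitive ` regular"
    using \<psi>_nonneg by (intro nonnegative_absolutely_integrable_1) (auto simp: integrable_on_def)
  then have "(\<lambda>t. \<bar>f t\<bar> *\<^sub>R \<psi> (primitive t)) absolutely_integrable_on regular
      \<and> integral regular (\<lambda>t. \<bar>f t\<bar> *\<^sub>R \<psi> (primitive t)) = J"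
    using has_absolute_integral_change_of_variables_real[OF regular_sets
        primitive_has_derivative_regular inj_on_primitive_regular] \<psi>_image
    by (blast intro: integral_unique)
  then have "((\<lambda>t. \<bar>f t\<bar> *\<^sub>R \<psi> (primitive t)) has_integral J) regular"
    using set_lebesgue_integral_eq_integral(1) integrable_integral by fastforce
  then have "(\<integral>\<^sup>+t\<in>regular. ennreal (\<bar>f t\<bar> *\<^sub>R \<psi> (primitive t)) \<partial>lborel) = ennreal J"
    by (intro nn_integral_has_integral_lebesgue') (auto simp: \<psi>_nonneg)
  moreover have "(\<integral>\<^sup>+t\<in>{0<..<x}. ennreal (f t * \<psi> (primitive t)) \<partial>lborel)
      = (\<integral>\<^sup>+t\<in>regular. ennreal (\<bar>f t\<bar> *\<^sub>R \<psi> (primitive t)) \<partial>lborel)"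
  proof (rule nn_integral_cong_AE)
    have "AE t in lborel. t \<notin> {t \<in> {0<..<x}. \<not> isCont f0 t}"
      by (rule AE_not_in[OF countable_imp_null_set_lborel[OF countable_discontinuities]])
    then show "AE t in lborel. ennreal (f t * \<psi> (primitive t)) * indicator {0<..<x} t
        = ennreal (\<bar>f t\<bar> *\<^sub>R \<psi> (primitive t)) * indicator regular t"
      by eventually_elim
        (auto simp: regular_def indicator_def dest: nonneg intro: order.antisym)
  qed
  ultimately show ?thesis
    by simp
qed

lemma powr_eq_nn_integral_primitive:
  assumes "0 < p"
  shows "ennreal (I powr p) = (\<integral>\<^sup>+t\<in>{0<..<x}. ennreal (f t * (p * primitive t powr (p - 1))) \<partial>lborel)"
proof -
  have "((\<lambda>u. u powr (p - 1)) has_integral I powr (p - 1 + 1) / (p - 1 + 1)) {0..I}"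
    by (rule has_integral_powr_from_0) (use assms I_nonneg in auto)
  then have "((\<lambda>u. p * u powr (p - 1)) has_integral p * (I powr p / p)) {0..I}"
    by (intro has_integral_mult_right) simp
  then show ?thesis
    using assms by (intro nn_integral_substitution[symmetric]) auto
qed

lemma nn_integral_weight_eq:
  "(\<integral>\<^sup>+y\<in>{0<..<x}. ennreal (p * y powr (p - 1) * f y powr p) \<partial>lborel)
    = (\<integral>\<^sup>+y\<in>{0<..<x}. ennreal (f y * (p * (y * f y) powr (p - 1))) \<partial>lborel)"
  by (rule nn_integral_cong) (auto simp: indicator_def powr_weight_eq nonneg)

lemma weight_le_primitive_weight:
  assumes "0 < t" "t < x" "1 \<le> p"
  shows "f t * (p * (t * f t) powr (p - 1)) \<le> f t * (p * primitive t powr (p - 1))"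
proof (cases "f t = 0")
  case False
  then have "0 < f t"
    using nonneg[OF assms(1,2)] by simp
  then show ?thesis
    using assms mult_le_primitive[OF assms(1,2)] by (auto intro!: mult_left_mono powr_mono2)
qed simp

lemma primitive_weight_le_weight:
  assumes "0 < t" "t < x" "0 < p" "p \<le> 1"
  shows "f t * (p * primitive t powr (p - 1)) \<le> f t * (p * (t * f t) powr (p - 1))"
proof (cases "f t = 0")
  case False
  then have "0 < f t"
    using nonneg[OF assms(1,2)] by simp
  then show ?thesis
    using assms mult_le_primitive[OF assms(1,2)] by (auto intro!: mult_left_mono powr_mono2')
qed simp

lemma weighted_le_powr:
  assumes "1 \<le> p"
  shows "(\<integral>\<^sup>+y\<in>{0<..<x}. ennreal (p * y powr (p - 1) * f y powr p) \<partial>lborel) \<le> ennreal (I powr p)"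
proof -
  have p: "0 < p"
    using assms by simp
  show ?thesis
    unfolding nn_integral_weight_eq powr_eq_nn_integral_primitive[OF p] using assms
    by (intro nn_integral_mono) (auto simp: indicator_def intro!: ennreal_leI weight_le_primitive_weight)
qed

lemma powr_le_weighted:
  assumes "0 < p" "p \<le> 1"
  shows "ennreal (I powr p) \<le> (\<integral>\<^sup>+y\<in>{0<..<x}. ennreal (p * y powr (p - 1) * f y powr p) \<partial>lborel)"
  unfolding nn_integral_weight_eq powr_eq_nn_integral_primitive[OF assms(1)] using assms
  by (intro nn_integral_mono) (auto simp: indicator_def intro!: ennreal_leI primitive_weight_le_weight)

lemma weighted_eq_powr:
  assumes "0 < p"
    and extremal: "\<And>t. 0 < t \<Longrightarrow> t < x \<Longrightarrow> 0 < f t \<Longrightarrow>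
      (\<integral>\<^sup>+y\<in>{0<..<t}. ennreal (f y) \<partial>lborel) = ennreal (t * f t)"
  shows "(\<integral>\<^sup>+y\<in>{0<..<x}. ennreal (p * y powr (p - 1) * f y powr p) \<partial>lborel) = ennreal (I powr p)"
  unfolding nn_integral_weight_eq powr_eq_nn_integral_primitive[OF assms(1)]
proof (rule nn_integral_cong)
  fix t :: real
  have "primitive t = t * f t" if "0 < t" "t < x" "0 < f t"
    using primitive_eq_nn_integral[OF that(1,2)] extremal[OF that] primitive_nonneg[of t] that
    by simp
  then show "ennreal (f t * (p * (t * f t) powr (p - 1))) * indicator {0<..<x} t
      = ennreal (f t * (p * primitive t powr (p - 1))) * indicator {0<..<x} t"
    using nonneg[of t] by (cases "0 < t \<and> t < x \<and> 0 < f t") (auto simp: indicator_def)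
qed

end

lemma SUP_min_real_mult: "(SUP n. ennreal (min a (real n)) * c) = ennreal a * c"
proof (rule antisym)
  show "(SUP n. ennreal (min a (real n)) * c) \<le> ennreal a * c"
    by (rule SUP_least) (auto intro!: mult_right_mono ennreal_leI)
  obtain n where "a \<le> real n"
    using real_arch_simple by blast
  then have "ennreal a * c = ennreal (min a (real n)) * c"
    by simp
  then show "ennreal a * c \<le> (SUP n. ennreal (min a (real n)) * c)"
    by (metis SUP_upper UNIV_I)
qed

context nonneg_decreasing
begin

lemma integrable_interpretation:
  assumes "(\<integral>\<^sup>+y\<in>{0<..<x}. ennreal (f y) \<partial>lborel) \<noteq> \<infinity>"
  obtains I where "nonneg_decreasing_integrable f x I" "(\<integral>\<^sup>+y\<in>{0<..<x}. ennreal (f y) \<partial>lborel) = ennreal I"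
proof -
  obtain I where "(\<integral>\<^sup>+y\<in>{0<..<x}. ennreal (f y) \<partial>lborel) = ennreal I" "0 \<le> I"
    using assms by (cases "\<integral>\<^sup>+y\<in>{0<..<x}. ennreal (f y) \<partial>lborel" rule: ennreal_cases) auto
  then show thesis
    by (intro that nonneg_decreasing_integrable.intro nonneg_decreasing_integrable_axioms.intro) (unfold_locales)
qed

lemma nonneg_decreasing_min: "nonneg_decreasing (\<lambda>y. min (f y) (real n)) x"
proof
  note measurable_on [measurable]
  have "(\<lambda>y. min (f y) (real n) * indicator {0<..<x} y)
      = (\<lambda>y. min (f y * indicator {0<..<x} y) (real n) * indicator {0<..<x} y)"
    by (auto simp: indicator_def fun_eq_iff)
  also have "\<dots> \<in> borel_measurable borel"
    by measurable
  finally show "(\<lambda>y. min (f y) (real n) * indicator {0<..<x} y) \<in> borel_measurable borel" .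
  show "min (f z) (real n) \<le> min (f y) (real n)" if "0 < y" "y \<le> z" "z < x" for y z
    using antimono[OF that] by (rule min.mono) simp
qed (use x_pos nonneg in auto)

lemma nn_integral_min_finite: "(\<integral>\<^sup>+y\<in>{0<..<x}. ennreal (min (f y) (real n)) \<partial>lborel) \<noteq> \<infinity>"
proof -
  have "(\<integral>\<^sup>+y\<in>{0<..<x}. ennreal (min (f y) (real n)) \<partial>lborel) \<le> (\<integral>\<^sup>+y\<in>{0<..<x}. ennreal (real n) \<partial>lborel)"
    by (intro nn_integral_mono) (auto simp: indicator_def intro!: ennreal_leI)
  also have "\<dots> < \<infinity>"
    using x_pos by (simp add: nn_integral_cmult_indicator ennreal_mult_less_top)
  finally show ?thesis
    by simp
qed

lemma nn_integral_SUP_min: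
  "(\<integral>\<^sup>+y\<in>{0<..<x}. ennreal (f y) \<partial>lborel) = (SUP n. \<integral>\<^sup>+y\<in>{0<..<x}. ennreal (min (f y) (real n)) \<partial>lborel)"
proof -
  have "(\<integral>\<^sup>+y\<in>{0<..<x}. ennreal (f y) \<partial>lborel)
      = (\<integral>\<^sup>+y. (SUP n. ennreal (min (f y) (real n)) * indicator {0<..<x} y) \<partial>lborel)"
    by (simp add: SUP_min_real_mult)
  also have "\<dots> = (SUP n. \<integral>\<^sup>+y\<in>{0<..<x}. ennreal (min (f y) (real n)) \<partial>lborel)"
  proof (rule nn_integral_monotone_convergence_SUP)
    show "incseq (\<lambda>n y. ennreal (min (f y) (real n)) * indicator {0<..<x} y)"
      by (auto simp: incseq_def le_fun_def intro!: mult_right_mono ennreal_leI)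
    fix n
    interpret fn: nonneg_decreasing "\<lambda>y. min (f y) (real n)" x
      by (rule nonneg_decreasing_min)
    note fn.measurable_on [measurable]
    have "(\<lambda>y. ennreal (min (f y) (real n)) * indicator {0<..<x} y)
        = (\<lambda>y. ennreal (min (f y) (real n) * indicator {0<..<x} y))"
      by (auto simp: indicator_def fun_eq_iff)
    also have "\<dots> \<in> borel_measurable lborel"
      by measurable
    finally show "(\<lambda>y. ennreal (min (f y) (real n)) * indicator {0<..<x} y) \<in> borel_measurable lborel" .
  qed
  finally show ?thesis .
qed

lemma nn_integral_min_le_root_weighted:
  assumes p: "0 < p" "p \<le> 1"
    and G: "(\<integral>\<^sup>+y\<in>{0<..<x}. ennreal (p * y powr (p - 1) * f y powr p) \<partial>lborel) = ennreal G"
    and G_nonneg: "0 \<le> G"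
  shows "(\<integral>\<^sup>+y\<in>{0<..<x}. ennreal (min (f y) (real n)) \<partial>lborel) \<le> ennreal (G powr (1 / p))"
proof -
  let ?fn = "\<lambda>y. min (f y) (real n)"
  interpret fn: nonneg_decreasing ?fn x
    by (rule nonneg_decreasing_min)
  obtain In where "nonneg_decreasing_integrable ?fn x In"
      and In: "(\<integral>\<^sup>+y\<in>{0<..<x}. ennreal (?fn y) \<partial>lborel) = ennreal In"
    using nn_integral_min_finite by (rule fn.integrable_interpretation)
  then interpret fnI: nonneg_decreasing_integrable ?fn x In
    by simp
  have "ennreal (In powr p)
      \<le> (\<integral>\<^sup>+y\<in>{0<..<x}. ennreal (p * y powr (p - 1) * ?fn y powr p) \<partial>lborel)"
    by (rule fnI.powr_le_weighted[OF p])
  also have "\<dots> \<le> ennreal G"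
    unfolding G[symmetric] using p nonneg
    by (intro nn_integral_mono) (auto simp: indicator_def intro!: ennreal_leI mult_left_mono powr_mono2)
  finally have "In powr p \<le> G"
    using G_nonneg by simp
  then have "(In powr p) powr (1 / p) \<le> G powr (1 / p)"
    using p by (intro powr_mono2) auto
  then show ?thesis
    using In p fnI.I_nonneg by (simp add: powr_powr ennreal_leI)
qed

text \<open>For \<open>p \<le> 1\<close> the finite case bounds every truncation \<open>min f n\<close> uniformly, and
  monotone convergence carries the bound over to \<open>f\<close>.\<close>
lemma weighted_eq_infinity:
  assumes p: "0 < p" "p \<le> 1"
    and infinite: "(\<integral>\<^sup>+y\<in>{0<..<x}. ennreal (f y) \<partial>lborel) = \<infinity>"
  shows "(\<integral>\<^sup>+y\<in>{0<..<x}. ennreal (p * y powr (p - 1) * f y powr p) \<partial>lborel) = \<infinity>"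
proof (rule ccontr)
  assume "(\<integral>\<^sup>+y\<in>{0<..<x}. ennreal (p * y powr (p - 1) * f y powr p) \<partial>lborel) \<noteq> \<infinity>"
  then obtain G where G: "(\<integral>\<^sup>+y\<in>{0<..<x}. ennreal (p * y powr (p - 1) * f y powr p) \<partial>lborel) = ennreal G"
      and G_nonneg: "0 \<le> G"
    using less_top_ennreal by (auto simp: less_top)
  have "(\<integral>\<^sup>+y\<in>{0<..<x}. ennreal (f y) \<partial>lborel) \<le> ennreal (G powr (1 / p))"
    unfolding nn_integral_SUP_min
    by (rule SUP_least) (rule nn_integral_min_le_root_weighted[OF p G G_nonneg])
  then show False
    using infinite by (simp add: top_unique)
qed

lemma weighted_le_epowr:
  assumes "1 \<le> p"
  shows "(\<integral>\<^sup>+y\<in>{0<..<x}. ennreal (p * y powr (p - 1) * f y powr p) \<partial>lborel)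
    \<le> epowr (\<integral>\<^sup>+y\<in>{0<..<x}. ennreal (f y) \<partial>lborel) p"
proof (cases "(\<integral>\<^sup>+y\<in>{0<..<x}. ennreal (f y) \<partial>lborel) = \<infinity>")
  case False
  then obtain I where "nonneg_decreasing_integrable f x I" and I: "(\<integral>\<^sup>+y\<in>{0<..<x}. ennreal (f y) \<partial>lborel) = ennreal I"
    by (rule integrable_interpretation)
  then interpret nonneg_decreasing_integrable f x I
    by simp
  show ?thesis
    using weighted_le_powr[OF assms] I_nonneg by (simp add: I epowr_def)
qed (simp add: epowr_def)

lemma epowr_le_weighted:
  assumes "0 < p" "p \<le> 1"
  shows "epowr (\<integral>\<^sup>+y\<in>{0<..<x}. ennreal (f y) \<partial>lborel) p
    \<le> (\<integral>\<^sup>+y\<in>{0<..<x}. ennreal (p * y powr (p - 1) * f y powr p) \<partial>lborel)"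
proof (cases "(\<integral>\<^sup>+y\<in>{0<..<x}. ennreal (f y) \<partial>lborel) = \<infinity>")
  case False
  then obtain I where "nonneg_decreasing_integrable f x I" and I: "(\<integral>\<^sup>+y\<in>{0<..<x}. ennreal (f y) \<partial>lborel) = ennreal I"
    by (rule integrable_interpretation)
  then interpret nonneg_decreasing_integrable f x I
    by simp
  show ?thesis
    using powr_le_weighted[OF assms] I_nonneg by (simp add: I epowr_def)
qed (simp add: weighted_eq_infinity[OF assms])

lemma weighted_eq_epowr:
  assumes "0 < p" and finite: "(\<integral>\<^sup>+y\<in>{0<..<x}. ennreal (f y) \<partial>lborel) \<noteq> \<infinity>"
    and extremal: "\<And>t. 0 < t \<Longrightarrow> t < x \<Longrightarrow> 0 < f t \<Longrightarrow>
      (\<integral>\<^sup>+y\<in>{0<..<t}. ennreal (f y) \<partial>lborel) = ennreal (t * f t)"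
  shows "(\<integral>\<^sup>+y\<in>{0<..<x}. ennreal (p * y powr (p - 1) * f y powr p) \<partial>lborel)
    = epowr (\<integral>\<^sup>+y\<in>{0<..<x}. ennreal (f y) \<partial>lborel) p"
proof -
  obtain I where "nonneg_decreasing_integrable f x I" and I: "(\<integral>\<^sup>+y\<in>{0<..<x}. ennreal (f y) \<partial>lborel) = ennreal I"
    using finite by (rule integrable_interpretation)
  then interpret nonneg_decreasing_integrable f x I
    by simp
  show ?thesis
    using weighted_eq_powr[OF assms(1) extremal] I_nonneg by (simp add: I epowr_def)
qed

end


section \<open>The kernel \<open>x^(-\<alpha>) dx/x\<close> on \<open>(0, l)\<close>\<close>

lemma ivl_eq: "0 < l \<Longrightarrow> ivl l = (if l = \<infinity> then {0<..} else {0<..<real_of_ereal l})"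
  by (cases l) (auto simp: ivl_def)

lemma sets_ivl: "0 < l \<Longrightarrow> ivl l \<in> sets borel"
  by (simp add: ivl_eq)

lemma ivl_lessThan_subset: "x \<in> ivl l \<Longrightarrow> {0<..<x} \<subseteq> ivl l"
proof
  fix y assume x: "x \<in> ivl l" and y: "y \<in> {0<..<x}"
  have "ereal y < ereal x"
    using y by simp
  also have "ereal x < l"
    using x by (simp add: ivl_def)
  finally show "y \<in> ivl l"
    using y by (simp add: ivl_def)
qed

lemma wt_pos:
  assumes "0 < \<alpha>" "y \<in> ivl l"
  shows "0 < wt l \<alpha> y"
proof (cases l)
  case (real L)
  with assms have "0 < y" "y < L"
    by (auto simp: ivl_def)
  then have "(y / L) powr \<alpha> < 1 powr \<alpha>"
    using assms by (intro powr_less_mono2) auto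
  then show ?thesis
    using real by (simp add: wt_def)
qed (use assms in \<open>auto simp: wt_def ivl_def\<close>)

lemma wt_le_1: "wt l \<alpha> y \<le> 1"
  by (simp add: wt_def)

lemma has_integral_powr_interval:
  fixes a b e :: real
  assumes "0 < a" "a \<le> b" "e \<noteq> -1"
  shows "((\<lambda>x. x powr e) has_integral (b powr (e + 1) - a powr (e + 1)) / (e + 1)) {a..b}"
proof -
  have "((\<lambda>x. x powr e) has_integral (\<lambda>t. t powr (e + 1) / (e + 1)) b - (\<lambda>t. t powr (e + 1) / (e + 1)) a) {a..b}"
  proof (rule fundamental_theorem_of_calculus)
    fix t assume "t \<in> {a..b}"
    then have "0 < t"
      using assms by auto
    moreover have "e + 1 \<noteq> 0"
      using assms by linarith
    ultimately have "((\<lambda>t. t powr (e + 1) / (e + 1)) has_real_derivative t powr e) (at t)"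
      by (auto intro!: derivative_eq_intros)
    then show "((\<lambda>t. t powr (e + 1) / (e + 1)) has_vector_derivative t powr e) (at t within {a..b})"
      by (simp add: has_real_derivative_iff_has_vector_derivative has_vector_derivative_at_within)
  qed (use assms in simp)
  then show ?thesis
    by (simp add: diff_divide_distrib)
qed

lemma nn_integral_kernel:
  assumes \<alpha>: "0 < \<alpha>" and y: "y \<in> ivl l"
  shows "(\<integral>\<^sup>+x\<in>{y<..} \<inter> ivl l. ennreal (x powr (-\<alpha>) / x) \<partial>lborel) = ennreal (y powr (-\<alpha>) * wt l \<alpha> y / \<alpha>)"
proof -
  have y0: "0 < y"
    using y by (simp add: ivl_def)
  have kernel_eq: "x powr (-\<alpha>) / x = x powr (-\<alpha> - 1)" if "0 < x" for x :: real
    using that by (simp add: powr_diff)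
  show ?thesis
  proof (cases "l = \<infinity>")
    case True
    have "((\<lambda>x. x powr (-\<alpha> - 1)) has_integral -(y powr (-\<alpha> - 1 + 1)) / (-\<alpha> - 1 + 1)) {y..}"
      by (rule has_integral_powr_to_inf) (use \<alpha> y0 in auto)
    then have "(\<integral>\<^sup>+x\<in>{y..}. ennreal (x powr (-\<alpha> - 1)) \<partial>lborel) = ennreal (y powr (-\<alpha>) / \<alpha>)"
      by (subst nn_integral_has_integral_lebesgue') auto
    moreover have "(\<integral>\<^sup>+x\<in>{y<..} \<inter> ivl l. ennreal (x powr (-\<alpha>) / x) \<partial>lborel)
        = (\<integral>\<^sup>+x\<in>{y..}. ennreal (x powr (-\<alpha> - 1)) \<partial>lborel)"
      using AE_lborel_singleton[of y]
      by (intro nn_integral_cong_AE, eventually_elim)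
        (use y0 True in \<open>auto simp: ivl_def indicator_def kernel_eq\<close>)
    ultimately show ?thesis
      using True by (simp add: wt_def)
  next
    case False
    then obtain L where L: "l = ereal L"
      using y by (cases l) (auto simp: ivl_def)
    then have yL: "y < L"
      using y by (auto simp: ivl_def)
    have "((\<lambda>x. x powr (-\<alpha> - 1)) has_integral (L powr (-\<alpha>) - y powr (-\<alpha>)) / (-\<alpha>)) {y..L}"
      using has_integral_powr_interval[OF y0, of L "-\<alpha> - 1"] yL \<alpha> by simp
    then have "(\<integral>\<^sup>+x\<in>{y..L}. ennreal (x powr (-\<alpha> - 1)) \<partial>lborel)
        = ennreal ((L powr (-\<alpha>) - y powr (-\<alpha>)) / (-\<alpha>))"
      by (intro nn_integral_has_integral_lebesgue') auto
    moreover have "(\<integral>\<^sup>+x\<in>{y<..} \<inter> ivl l. ennreal (x powr (-\<alpha>) / x) \<partial>lborel)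
        = (\<integral>\<^sup>+x\<in>{y..L}. ennreal (x powr (-\<alpha> - 1)) \<partial>lborel)"
      using AE_lborel_singleton[of y] AE_lborel_singleton[of L]
      by (intro nn_integral_cong_AE, eventually_elim)
        (use y0 L in \<open>auto simp: ivl_def indicator_def kernel_eq\<close>)
    moreover have "y powr (-\<alpha>) * (y / L) powr \<alpha> = L powr (-\<alpha>)"
      using y0 yL by (simp add: powr_divide powr_minus field_simps)
    then have "(L powr (-\<alpha>) - y powr (-\<alpha>)) / (-\<alpha>) = y powr (-\<alpha>) * wt l \<alpha> y / \<alpha>"
      using L \<alpha> by (simp add: wt_def field_simps)
    ultimately show ?thesis
      by simp
  qed
qed

lemma nn_integral_exchange_kernel:
  fixes g :: "real \<Rightarrow> real"
  assumes g [measurable]: "g \<in> borel_measurable borel" and \<alpha>: "0 < \<alpha>" and l: "0 < l"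
  shows "(\<integral>\<^sup>+x\<in>ivl l. (\<integral>\<^sup>+y\<in>{0<..<x}. ennreal (g y) \<partial>lborel) * ennreal (x powr (-\<alpha>) / x) \<partial>lborel)
       = (\<integral>\<^sup>+y\<in>ivl l. ennreal (g y) * ennreal (y powr (-\<alpha>) * wt l \<alpha> y / \<alpha>) \<partial>lborel)"
proof -
  have [measurable]: "ivl l \<in> sets borel"
    using l by (rule sets_ivl)
  define H where "H x y = ennreal (g y) * ennreal (x powr (-\<alpha>) / x) * indicator (ivl l) x
    * indicator {0<..} y * indicator {y<..} x" for x y :: real
  have [measurable]: "Measurable.pred (borel \<Otimes>\<^sub>M borel) (\<lambda>z::real \<times> real. fst z \<in> {snd z<..})"
    unfolding greaterThan_iff by measurable
  have H_measurable: "(\<lambda>(x, y). H x y) \<in> borel_measurable (lborel \<Otimes>\<^sub>M lborel)"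
    unfolding H_def by measurable
  have "(\<integral>\<^sup>+x\<in>ivl l. (\<integral>\<^sup>+y\<in>{0<..<x}. ennreal (g y) \<partial>lborel) * ennreal (x powr (-\<alpha>) / x) \<partial>lborel)
      = (\<integral>\<^sup>+x. (\<integral>\<^sup>+y. H x y \<partial>lborel) \<partial>lborel)"
  proof (rule nn_integral_cong)
    fix x :: real
    have "(\<integral>\<^sup>+y. H x y \<partial>lborel)
        = (\<integral>\<^sup>+y. ennreal (g y) * indicator {0<..<x} y * (ennreal (x powr (-\<alpha>) / x) * indicator (ivl l) x) \<partial>lborel)"
      by (rule nn_integral_cong) (simp add: H_def indicator_def)
    also have "\<dots> = (\<integral>\<^sup>+y\<in>{0<..<x}. ennreal (g y) \<partial>lborel) * (ennreal (x powr (-\<alpha>) / x) * indicator (ivl l) x)"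
      by (rule nn_integral_multc) measurable
    finally show "(\<integral>\<^sup>+y\<in>{0<..<x}. ennreal (g y) \<partial>lborel) * ennreal (x powr (-\<alpha>) / x) * indicator (ivl l) x
        = (\<integral>\<^sup>+y. H x y \<partial>lborel)"
      by (simp add: mult_ac)
  qed
  also have "\<dots> = (\<integral>\<^sup>+y. (\<integral>\<^sup>+x. H x y \<partial>lborel) \<partial>lborel)"
    using lborel_pair.Fubini'[OF H_measurable] by simp
  also have "\<dots> = (\<integral>\<^sup>+y\<in>ivl l. ennreal (g y) * ennreal (y powr (-\<alpha>) * wt l \<alpha> y / \<alpha>) \<partial>lborel)"
  proof (rule nn_integral_cong)
    fix y :: real
    have "(\<integral>\<^sup>+x. H x y \<partial>lborel)
        = ennreal (g y) * indicator {0<..} y * (\<integral>\<^sup>+x\<in>{y<..} \<inter> ivl l. ennreal (x powr (-\<alpha>) / x) \<partial>lborel)"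
      by (subst nn_integral_cmult[symmetric]) (auto simp: H_def indicator_def intro!: nn_integral_cong)
    also have "\<dots> = ennreal (g y) * ennreal (y powr (-\<alpha>) * wt l \<alpha> y / \<alpha>) * indicator (ivl l) y"
    proof (cases "y \<in> ivl l")
      case True
      then show ?thesis
        using nn_integral_kernel[OF \<alpha> True] by (simp add: ivl_def)
    next
      case False
      then have "{y<..} \<inter> ivl l = {}" if "0 < y"
        using ivl_lessThan_subset that by fastforce
      then show ?thesis
        using False by (cases "0 < y") auto
    qed
    finally show "(\<integral>\<^sup>+x. H x y \<partial>lborel)
        = ennreal (g y) * ennreal (y powr (-\<alpha>) * wt l \<alpha> y / \<alpha>) * indicator (ivl l) y" .
  qed
  finally show ?thesis .
qed


section \<open>Hardy's inequality and its extremal functions\<close>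

lemma admissible_measurable:
  assumes "admissible l f" "0 < l"
  shows "(\<lambda>y. f y * indicator (ivl l) y) \<in> borel_measurable borel"
proof -
  have "ivl l \<inter> space lborel \<in> sets lborel"
    using assms(2) by (simp add: sets_ivl)
  moreover have "f \<in> borel_measurable (restrict_space lborel (ivl l))"
    using assms(1) by (simp add: admissible_def)
  ultimately have "(\<lambda>y. indicator (ivl l) y *\<^sub>R f y) \<in> borel_measurable lborel"
    using borel_measurable_restrict_space_iff by blast
  then show ?thesis
    by (simp add: mult.commute)
qed

lemma nonneg_decreasing_admissible:
  assumes adm: "admissible l f" and l: "0 < l" and x: "x \<in> ivl l"
  shows "nonneg_decreasing f x"
proof
  have sub: "{0<..<x} \<subseteq> ivl l"
    using x by (rule ivl_lessThan_subset)
  show "0 < x"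
    using x by (simp add: ivl_def)
  note admissible_measurable[OF adm l, measurable]
  have "(\<lambda>y. f y * indicator {0<..<x} y) = (\<lambda>y. f y * indicator (ivl l) y * indicator {0<..<x} y)"
    using sub by (auto simp: indicator_def fun_eq_iff)
  also have "\<dots> \<in> borel_measurable borel"
    by measurable
  finally show "(\<lambda>y. f y * indicator {0<..<x} y) \<in> borel_measurable borel" .
  show "0 \<le> f y" if "0 < y" "y < x" for y
    using adm sub that by (auto simp: admissible_def)
  show "f z \<le> f y" if "0 < y" "y \<le> z" "z < x" for y z
  proof -
    have "y \<in> ivl l" "z \<in> ivl l"
      using sub that by auto
    then show ?thesis
      using adm \<open>y \<le> z\<close> by (auto simp: admissible_def)
  qed
qed

lemma ennreal_weighted_kernel_eq:
  fixes y a \<alpha> p W :: real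
  assumes "0 < y" "0 \<le> a" "0 < \<alpha>" "0 < p" "0 \<le> W"
  shows "ennreal (p * y powr (p - 1) * a powr p) * ennreal (y powr (-\<alpha>) * W / \<alpha>)
    = ennreal (p / \<alpha>) * ennreal ((y * a) powr p * y powr (-\<alpha>) * W / y)"
proof -
  have "ennreal (p * y powr (p - 1) * a powr p) * ennreal (y powr (-\<alpha>) * W / \<alpha>)
      = ennreal (p * y powr (p - 1) * a powr p * (y powr (-\<alpha>) * W / \<alpha>))"
    using assms by (intro ennreal_mult[symmetric]) auto
  also have "p * y powr (p - 1) * a powr p * (y powr (-\<alpha>) * W / \<alpha>)
      = p / \<alpha> * ((y * a) powr p * y powr (-\<alpha>) * W / y)"
    using assms by (simp add: powr_mult powr_diff field_simps)
  also have "ennreal \<dots> = ennreal (p / \<alpha>) * ennreal ((y * a) powr p * y powr (-\<alpha>) * W / y)"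
    using assms by (intro ennreal_mult) auto
  finally show ?thesis .
qed

lemma hardyR_eq_iterated:
  assumes adm: "admissible l f" and l: "0 < l" and \<alpha>: "0 < \<alpha>" and p: "0 < p"
  shows "ennreal (p / \<alpha>) * hardyR p \<alpha> l f
    = (\<integral>\<^sup>+x\<in>ivl l. (\<integral>\<^sup>+y\<in>{0<..<x}. ennreal (p * y powr (p - 1) * f y powr p) \<partial>lborel)
        * ennreal (x powr (-\<alpha>) / x) \<partial>lborel)"
proof -
  define f0 where "f0 y = f y * indicator (ivl l) y" for y
  have [measurable]: "f0 \<in> borel_measurable borel" "ivl l \<in> sets borel"
    unfolding f0_def[abs_def] using admissible_measurable[OF adm l] sets_ivl[OF l] by auto
  have f0_eq: "y \<in> ivl l \<Longrightarrow> f0 y = f y" for y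
    by (simp add: f0_def)
  have f_nonneg: "y \<in> ivl l \<Longrightarrow> 0 \<le> f y" for y
    using adm by (auto simp: admissible_def)
  define g where "g y = p * y powr (p - 1) * f0 y powr p" for y
  define h where "h y = (y * f0 y) powr p * y powr (-\<alpha>) * wt l \<alpha> y / y" for y
  have g_measurable [measurable]: "g \<in> borel_measurable borel"
    unfolding g_def[abs_def] by measurable
  have [measurable]: "h \<in> borel_measurable borel"
    unfolding h_def[abs_def] wt_def by measurable
  have "(\<integral>\<^sup>+x\<in>ivl l. (\<integral>\<^sup>+y\<in>{0<..<x}. ennreal (p * y powr (p - 1) * f y powr p) \<partial>lborel)
        * ennreal (x powr (-\<alpha>) / x) \<partial>lborel)
      = (\<integral>\<^sup>+x\<in>ivl l. (\<integral>\<^sup>+y\<in>{0<..<x}. ennreal (g y) \<partial>lborel) * ennreal (x powr (-\<alpha>) / x) \<partial>lborel)"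
  proof (rule nn_integral_cong)
    fix x
    have "(\<integral>\<^sup>+y\<in>{0<..<x}. ennreal (p * y powr (p - 1) * f y powr p) \<partial>lborel)
        = (\<integral>\<^sup>+y\<in>{0<..<x}. ennreal (g y) \<partial>lborel)" if "x \<in> ivl l"
      using ivl_lessThan_subset[OF that] by (intro nn_integral_cong) (auto simp: indicator_def g_def f0_eq)
    then show "(\<integral>\<^sup>+y\<in>{0<..<x}. ennreal (p * y powr (p - 1) * f y powr p) \<partial>lborel)
          * ennreal (x powr (-\<alpha>) / x) * indicator (ivl l) x
        = (\<integral>\<^sup>+y\<in>{0<..<x}. ennreal (g y) \<partial>lborel) * ennreal (x powr (-\<alpha>) / x) * indicator (ivl l) x"
      by (cases "x \<in> ivl l") simp_all
  qed
  also have "\<dots> = (\<integral>\<^sup>+y\<in>ivl l. ennreal (g y) * ennreal (y powr (-\<alpha>) * wt l \<alpha> y / \<alpha>) \<partial>lborel)"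
    by (rule nn_integral_exchange_kernel[OF g_measurable \<alpha> l])
  also have "\<dots> = (\<integral>\<^sup>+y. ennreal (p / \<alpha>) * (ennreal (h y) * indicator (ivl l) y) \<partial>lborel)"
  proof (rule nn_integral_cong)
    fix y
    show "ennreal (g y) * ennreal (y powr (-\<alpha>) * wt l \<alpha> y / \<alpha>) * indicator (ivl l) y
        = ennreal (p / \<alpha>) * (ennreal (h y) * indicator (ivl l) y)"
    proof (cases "y \<in> ivl l")
      case True
      then have y: "0 < y" and w: "0 < wt l \<alpha> y" and f0_y: "0 \<le> f0 y"
        using wt_pos[OF \<alpha>] f_nonneg f0_eq by (auto simp: ivl_def)
      show ?thesis
        using ennreal_weighted_kernel_eq[OF y f0_y \<alpha> p less_imp_le[OF w]] True
        by (simp add: g_def h_def)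
    qed simp
  qed
  also have "\<dots> = ennreal (p / \<alpha>) * (\<integral>\<^sup>+y\<in>ivl l. ennreal (h y) \<partial>lborel)"
    by (rule nn_integral_cmult) measurable
  also have "(\<integral>\<^sup>+y\<in>ivl l. ennreal (h y) \<partial>lborel) = hardyR p \<alpha> l f"
    unfolding hardyR_def by (rule nn_integral_cong) (auto simp: h_def f0_eq indicator_def)
  finally show ?thesis
    by simp
qed

lemma hardy_inequality_ge:
  assumes adm: "admissible l f" and l: "0 < l" and \<alpha>: "0 < \<alpha>" and p: "1 \<le> p"
  shows "ennreal (p / \<alpha>) * hardyR p \<alpha> l f \<le> hardyL p \<alpha> l f"
proof -
  have "ennreal (p / \<alpha>) * hardyR p \<alpha> l f
    = (\<integral>\<^sup>+x\<in>ivl l. (\<integral>\<^sup>+y\<in>{0<..<x}. ennreal (p * y powr (p - 1) * f y powr p) \<partial>lborel)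
        * ennreal (x powr (-\<alpha>) / x) \<partial>lborel)"
    using p by (intro hardyR_eq_iterated[OF adm l \<alpha>]) simp
  also have "\<dots> \<le> hardyL p \<alpha> l f"
    unfolding hardyL_def
    using nonneg_decreasing.weighted_le_epowr[OF nonneg_decreasing_admissible[OF adm l] p]
    by (intro nn_integral_mono) (auto simp: indicator_def intro!: mult_right_mono)
  finally show ?thesis .
qed

lemma hardy_inequality_le:
  assumes adm: "admissible l f" and l: "0 < l" and \<alpha>: "0 < \<alpha>" and p: "0 < p" "p \<le> 1"
  shows "hardyL p \<alpha> l f \<le> ennreal (p / \<alpha>) * hardyR p \<alpha> l f"
proof -
  have "hardyL p \<alpha> l f
    \<le> (\<integral>\<^sup>+x\<in>ivl l. (\<integral>\<^sup>+y\<in>{0<..<x}. ennreal (p * y powr (p - 1) * f y powr p) \<partial>lborel)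
        * ennreal (x powr (-\<alpha>) / x) \<partial>lborel)"
    unfolding hardyL_def
    using nonneg_decreasing.epowr_le_weighted[OF nonneg_decreasing_admissible[OF adm l] p]
    by (intro nn_integral_mono) (auto simp: indicator_def intro!: mult_right_mono)
  also have "\<dots> = ennreal (p / \<alpha>) * hardyR p \<alpha> l f"
    by (rule hardyR_eq_iterated[OF adm l \<alpha> p(1), symmetric])
  finally show ?thesis .
qed

lemma admissible_indicator:
  assumes "0 \<le> A"
  shows "admissible l (\<lambda>x. A * indicator {0<..<c} x)"
  unfolding admissible_def
proof (intro conjI ballI impI)
  show "(\<lambda>x. A * indicator {0<..<c} x) \<in> borel_measurable (restrict_space lborel (ivl l))"
    by (rule measurable_restrict_space1) measurable
  fix x y assume "x \<in> ivl l" "y \<in> ivl l" "x \<le> y"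
  then show "A * indicator {0<..<c} y \<le> A * indicator {0<..<c} x"
    using assms by (auto simp: indicator_def ivl_def)
qed (use assms in auto)

lemma hardy_indicator_eq:
  assumes A: "0 \<le> A" and l: "0 < l" and \<alpha>: "0 < \<alpha>" and p: "0 < p"
  shows "hardyL p \<alpha> l (\<lambda>x. A * indicator {0<..<c} x)
    = ennreal (p / \<alpha>) * hardyR p \<alpha> l (\<lambda>x. A * indicator {0<..<c} x)"
proof -
  let ?f = "\<lambda>x. A * indicator {0<..<c} x"
  have adm: "admissible l ?f"
    using A by (rule admissible_indicator)
  have "epowr (\<integral>\<^sup>+y\<in>{0<..<x}. ennreal (?f y) \<partial>lborel) p
      = (\<integral>\<^sup>+y\<in>{0<..<x}. ennreal (p * y powr (p - 1) * ?f y powr p) \<partial>lborel)"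
    if x: "x \<in> ivl l" for x
  proof -
    interpret nonneg_decreasing ?f x
      by (rule nonneg_decreasing_admissible[OF adm l x])
    have "(\<integral>\<^sup>+y\<in>{0<..<x}. ennreal (?f y) \<partial>lborel) \<le> (\<integral>\<^sup>+y\<in>{0<..<x}. ennreal A \<partial>lborel)"
      using A by (intro nn_integral_mono) (auto simp: indicator_def)
    also have "\<dots> < \<infinity>"
      using x_pos by (simp add: nn_integral_cmult_indicator ennreal_mult_less_top)
    finally have "(\<integral>\<^sup>+y\<in>{0<..<x}. ennreal (?f y) \<partial>lborel) \<noteq> \<infinity>"
      by simp
    moreover have "(\<integral>\<^sup>+y\<in>{0<..<t}. ennreal (?f y) \<partial>lborel) = ennreal (t * ?f t)"
      if "0 < t" "0 < ?f t" for t
    proof -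
      have "t < c"
        using that by (cases "t < c") (auto simp: indicator_def)
      then have "(\<integral>\<^sup>+y\<in>{0<..<t}. ennreal (?f y) \<partial>lborel) = (\<integral>\<^sup>+y\<in>{0<..<t}. ennreal A \<partial>lborel)"
        by (intro nn_integral_cong) (auto simp: indicator_def)
      then show ?thesis
        using \<open>0 < t\<close> \<open>t < c\<close> A by (simp add: nn_integral_cmult_indicator ennreal_mult' mult.commute)
    qed
    ultimately show ?thesis
      by (intro weighted_eq_epowr[OF p, symmetric]) auto
  qed
  then have "hardyL p \<alpha> l ?f
    = (\<integral>\<^sup>+x\<in>ivl l. (\<integral>\<^sup>+y\<in>{0<..<x}. ennreal (p * y powr (p - 1) * ?f y powr p) \<partial>lborel)
        * ennreal (x powr (-\<alpha>) / x) \<partial>lborel)"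
    unfolding hardyL_def by (intro nn_integral_cong) (auto simp: indicator_def)
  also have "\<dots> = ennreal (p / \<alpha>) * hardyR p \<alpha> l ?f"
    by (rule hardyR_eq_iterated[OF adm l \<alpha> p, symmetric])
  finally show ?thesis .
qed


lemma hardyR_indicator_finite:
  assumes A: "0 \<le> A" and c: "0 < c" and \<alpha>p: "\<alpha> < p"
  shows "hardyR p \<alpha> l (\<lambda>x. A * indicator {0<..<c} x) < \<infinity>"
proof -
  have "((\<lambda>x. x powr (p - \<alpha> - 1)) has_integral c powr (p - \<alpha> - 1 + 1) / (p - \<alpha> - 1 + 1)) {0..c}"
    by (rule has_integral_powr_from_0) (use \<alpha>p c in auto)
  then have "((\<lambda>x. A powr p * x powr (p - \<alpha> - 1))
      has_integral A powr p * (c powr (p - \<alpha> - 1 + 1) / (p - \<alpha> - 1 + 1))) {0..c}"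
    by (rule has_integral_mult_right)
  then have bound: "(\<integral>\<^sup>+x\<in>{0..c}. ennreal (A powr p * x powr (p - \<alpha> - 1)) \<partial>lborel) < \<infinity>"
    by (subst nn_integral_has_integral_lebesgue') auto
  have "hardyR p \<alpha> l (\<lambda>x. A * indicator {0<..<c} x)
      \<le> (\<integral>\<^sup>+x\<in>{0..c}. ennreal (A powr p * x powr (p - \<alpha> - 1)) \<partial>lborel)"
    unfolding hardyR_def
  proof (intro nn_integral_mono)
    fix x
    show "ennreal ((x * (A * indicator {0<..<c} x)) powr p * x powr (-\<alpha>) * wt l \<alpha> x / x) * indicator (ivl l) x
      \<le> ennreal (A powr p * x powr (p - \<alpha> - 1)) * indicator {0..c} x"
    proof (cases "x \<in> ivl l \<and> x \<in> {0<..<c}")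
      case True
      then have "(x * (A * indicator {0<..<c} x)) powr p * x powr (-\<alpha>) * wt l \<alpha> x / x
          = A powr p * x powr (p - \<alpha> - 1) * wt l \<alpha> x"
        using A by (simp add: powr_mult powr_diff powr_add powr_minus field_simps)
      also have "\<dots> \<le> A powr p * x powr (p - \<alpha> - 1)"
        by (intro mult_left_le wt_le_1) auto
      finally show ?thesis
        using True by (auto intro!: ennreal_leI simp: indicator_def)
    qed (auto simp: indicator_def)
  qed
  then show ?thesis
    using bound by (rule order.strict_trans1)
qed

lemma hardyR_indicator_pos:
  assumes A: "0 < A" and c: "0 < c" "ereal c < l" and \<alpha>: "0 < \<alpha>"
  shows "0 < hardyR p \<alpha> l (\<lambda>x. A * indicator {0<..<c} x)"
proof (rule ccontr)
  define h where "h x = (x * (A * indicator {0<..<c} x)) powr p * x powr (-\<alpha>) * wt l \<alpha> x / x" for x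
  have "0 < l"
    using c by (metis ereal_less(2) order.strict_trans)
  then have [measurable]: "ivl l \<in> sets borel"
    by (rule sets_ivl)
  have [measurable]: "h \<in> borel_measurable borel"
    unfolding h_def[abs_def] wt_def by measurable
  have c_sub: "{0<..<c} \<subseteq> ivl l"
    using c by (intro ivl_lessThan_subset) (simp add: ivl_def)
  assume "\<not> 0 < hardyR p \<alpha> l (\<lambda>x. A * indicator {0<..<c} x)"
  then have "(\<integral>\<^sup>+x. ennreal (h x) * indicator (ivl l) x \<partial>lborel) = 0"
    by (simp add: hardyR_def h_def zero_less_iff_neq_zero)
  then have "AE x in lborel. ennreal (h x) * indicator (ivl l) x = 0"
    by (subst (asm) nn_integral_0_iff_AE) auto
  then have "AE x in lborel. x \<notin> {0<..<c}"
  proof eventually_elim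
    case (elim x)
    show ?case
    proof
      assume x: "x \<in> {0<..<c}"
      then have "x \<in> ivl l"
        using c_sub by auto
      then have "0 < h x"
        using x wt_pos[OF \<alpha>] A by (auto simp: h_def)
      with elim \<open>x \<in> ivl l\<close> show False
        by simp
    qed
  qed
  then have "emeasure lborel {0<..<c} = 0"
    by (subst (asm) AE_iff_measurable[of "{0<..<c}"]) auto
  then show False
    using c by simp
qed

theorem theorem3p2:
  fixes p \<alpha> :: real and l :: ereal
  assumes "0 < p" and "0 < \<alpha>" and "\<alpha> < p" and "0 < l"
  shows
    "(\<forall>f. admissible l f \<longrightarrow> 1 \<le> p \<longrightarrow>
         hardyL p \<alpha> l f \<ge> ennreal (p / \<alpha>) * hardyR p \<alpha> l f)
   \<and> (\<forall>f. admissible l f \<longrightarrow> p \<le> 1 \<longrightarrow>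
         hardyL p \<alpha> l f \<le> ennreal (p / \<alpha>) * hardyR p \<alpha> l f)
   \<and> (\<forall>A c. 0 < A \<longrightarrow> 0 < c \<longrightarrow> ereal c < l \<longrightarrow>
         hardyL p \<alpha> l (\<lambda>x. A * indicator {0<..<c} x)
           = ennreal (p / \<alpha>) * hardyR p \<alpha> l (\<lambda>x. A * indicator {0<..<c} x))
   \<and> (1 \<le> p \<longrightarrow> (\<forall>C::real. C > p / \<alpha> \<longrightarrow>
         (\<exists>f. admissible l f \<and> hardyL p \<alpha> l f < ennreal C * hardyR p \<alpha> l f)))
   \<and> (p \<le> 1 \<longrightarrow> (\<forall>C::real. 0 \<le> C \<longrightarrow> C < p / \<alpha> \<longrightarrow>
         (\<exists>f. admissible l f \<and> hardyL p \<alpha> l f > ennreal C * hardyR p \<alpha> l f)))"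
proof -
  note p = assms(1) and \<alpha> = assms(2,3) and l = assms(4)
  have p_\<alpha>: "0 < p / \<alpha>"
    using p \<alpha> by simp
  obtain c where c: "0 < c" "ereal c < l"
    using l by (cases l) (auto intro: that[of 1] that[of "real_of_ereal l / 2"])
  let ?\<chi> = "\<lambda>x. 1 * indicator {0<..<c} x :: real"
  have adm: "admissible l ?\<chi>"
    by (rule admissible_indicator) simp
  have extremal: "hardyL p \<alpha> l ?\<chi> = ennreal (p / \<alpha>) * hardyR p \<alpha> l ?\<chi>"
    using hardy_indicator_eq[of 1 l \<alpha> p c] p \<alpha> l by simp
  have R: "0 < hardyR p \<alpha> l ?\<chi>" "hardyR p \<alpha> l ?\<chi> < \<infinity>"
    using hardyR_indicator_pos[of 1 c l \<alpha> p] hardyR_indicator_finite[of 1 c \<alpha> p l] c \<alpha> l by auto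
  have "hardyL p \<alpha> l ?\<chi> < ennreal C * hardyR p \<alpha> l ?\<chi>" if "p / \<alpha> < C" for C
    unfolding extremal using that p_\<alpha> R by (intro ennreal_mult_strict_right_mono ennreal_lessI) auto
  moreover have "ennreal C * hardyR p \<alpha> l ?\<chi> < hardyL p \<alpha> l ?\<chi>" if "C < p / \<alpha>" for C
    unfolding extremal using that p_\<alpha> R by (intro ennreal_mult_strict_right_mono ennreal_lessI) auto
  ultimately show ?thesis
    using hardy_inequality_ge[OF _ l \<alpha>(1)] hardy_inequality_le[OF _ l \<alpha>(1) p]
      hardy_indicator_eq[OF _ l \<alpha>(1) p] adm
    by (auto simp: less_imp_le)
qed

end
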